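(* Let $m\ge 2$, let the key set $\{k_1,\dots,k_m\}$ be $\epsilon$-JL with $\epsilon\le\frac{1}{m^2(m-1)}$, and let the values satisfy $\langle v_i,v_i\rangle=1$ for all $i$ and $|\langle v_i,v_j\rangle|\le\alpha$ for all $i\neq j$, where $\alpha<\frac{m-1}{m+1}$. Then for every $m$-repetitive MQAR stream over $S$, every $0\le t\le N$, and every $i$ with $r_i^{(t)}>0$, the decoding step applied to the query $k_i$ and the gradient-descent state $W^{(t)}$ outputs exactly $v_i$. Thus gradient descent with decoding solves $m$-repetitive MQAR exactly using a state of $d^2$ parameters.
   Context: All vectors are row vectors in $\mathbb{R}^{1\times d}$. Fix $m\ge 1$ and a set $S=\{(k_1,v_1),\dots,(k_m,v_m)\}$ with $k_1,\dots,k_m\in\mathbb{R}^{1\times d}$ pairwise distinct and $v_1,\dots,v_m\in\mathbb{R}^{1\times d}$. An $m$-repetitive MQAR stream is a sequence $(k^{(1)},v^{(1)}),\dots,(k^{(N)},v^{(N)})$ with $(k^{(t)},v^{(t)})\in S$ for every $t$. For $0\le t\le N$ and $i\in\{1,\dots,m\}$, $r_i^{(t)}$ denotes the number of $s\in\{1,\dots,t\}$ with $(k^{(s)},v^{(s)})=(k_i,v_i)$. The key set is $\epsilon$-JL if $\langle k_i,k_i\rangle=1$ for all $i$ and $|\langle k_i,k_j\rangle|\le\epsilon$ for all $i\neq j$. The gradient-descent (delta-rule) state is the sequence of matrices $W^{(t)}\in\mathbb{R}^{d\times d}$ defined by $W^{(0)}=0$ and $W^{(t+1)}=W^{(t)}-(k^{(t+1)})^{\top}k^{(t+1)}W^{(t)}+(k^{(t+1)})^{\top}v^{(t+1)}$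 for $0\le t<N$. Decoding step: given a query $k_i$ and a state $W$, output $v_{i^*}$ where $i^*=\arg\max_{i'\in\{1,\dots,m\}}\langle v_{i'},k_iW\rangle$. *)

theory Defs
  imports "HOL-Analysis.Analysis"
begin

text \<open>Row vectors in R^{1 x d} are rendered as real^'d; a d x d matrix W as real^'d^'d
  (W $ i $ j = entry in row i, column j). The row-vector/matrix product x W is  x v* W.\<close>

definition outer :: "real^'d \<Rightarrow> real^'d \<Rightarrow> real^'d^'d" where
  "outer a b = (\<chi> i j. a $ i * b $ j)"

text \<open>Gradient-descent (delta-rule) state. The stream is given by an index sequence
  idx :: nat => nat, the t-th element of the stream being (k (idx t), v (idx t)).\<close>
fun gd_state :: "(nat \<Rightarrow> real^'d) \<Rightarrow> (nat \<Rightarrow> real^'d) \<Rightarrow> (nat \<Rightarrow> nat) \<Rightarrow> nat \<Rightarrow> real^'d^'d" where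
  "gd_state k v idx 0 = 0"
| "gd_state k v idx (Suc t) =
     gd_state k v idx t - outer (k (idx (Suc t))) (k (idx (Suc t))) ** gd_state k v idx t
     + outer (k (idx (Suc t))) (v (idx (Suc t)))"

definition rcount :: "(nat \<Rightarrow> nat) \<Rightarrow> nat \<Rightarrow> nat \<Rightarrow> nat" where
  "rcount idx i t = card {s \<in> {1..t}. idx s = i}"

definition eps_JL :: "nat \<Rightarrow> (nat \<Rightarrow> real^'d) \<Rightarrow> real \<Rightarrow> bool" where
  "eps_JL m k \<epsilon> \<longleftrightarrow> (\<forall>i\<in>{1..m}. k i \<bullet> k i = 1) \<and>
     (\<forall>i\<in>{1..m}. \<forall>j\<in>{1..m}. i \<noteq> j \<longrightarrow> \<bar>k i \<bullet> k j\<bar> \<le> \<epsilon>)"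

definition decode_argmax :: "nat \<Rightarrow> (nat \<Rightarrow> real^'d) \<Rightarrow> real^'d \<Rightarrow> real^'d^'d \<Rightarrow> nat set" where
  "decode_argmax m v q W = {i'\<in>{1..m}. \<forall>j\<in>{1..m}. v j \<bullet> (q v* W) \<le> v i' \<bullet> (q v* W)}"

end

theory Submission
  imports Defs
begin

text \<open>By induction the state is W = \<Sum>j. k_j^T c_j, and a delta-rule step with the unit key k_a
  only replaces c_a by v_a minus the crosstalk \<Sum>(j\<noteq>a). \<langle>k_a,k_j\<rangle> c_j. With
  \<delta> = 1/(m^2 - 1), every coefficient stays either 0 or \<delta>-close to its value, hence of norm at
  most 1 + \<delta>, and (m - 1) \<epsilon> (1 + \<delta>) \<le> \<delta> bounds every crosstalk by \<delta>. Querying k_i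
  returns c_i plus the current crosstalk, while c_i is v_i minus the crosstalk at the last write
  of key i; so the readout is \<delta>-close to v_i, and \<alpha> + 2\<delta> < 1 makes v_i the unique argmax.\<close>

definition crosstalk :: "'i set \<Rightarrow> ('i \<Rightarrow> 'a::real_inner) \<Rightarrow> ('i \<Rightarrow> 'b::real_vector) \<Rightarrow> 'i \<Rightarrow> 'b" where
  "crosstalk A k c a = (\<Sum>j\<in>A - {a}. (k a \<bullet> k j) *\<^sub>R c j)"

lemma crosstalk_diff:
  "crosstalk A k c a - crosstalk A k c' a = crosstalk A k (\<lambda>j. c j - c' j) a"
  by (simp add: crosstalk_def scaleR_diff_right sum_subtractf)

lemma outer_zero_right [simp]: "outer a 0 = 0"
  by (simp add: outer_def vec_eq_iff)

lemma outer_add_right: "outer a (x + y) = outer a x + outer a y"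
  by (simp add: outer_def vec_eq_iff algebra_simps)

lemma outer_diff_right: "outer a (x - y) = outer a x - outer a y"
  by (simp add: outer_def vec_eq_iff algebra_simps)

lemma outer_matrix_mult: "outer a b ** W = outer a (b v* W)"
  by (simp add: outer_def vec_eq_iff matrix_matrix_mult_def vector_matrix_mult_def
      sum_distrib_left mult.assoc)

lemma vector_matrix_mult_outer_sum:
  "x v* (\<Sum>j\<in>A. outer (k j) (c j)) = (\<Sum>j\<in>A. (x \<bullet> k j) *\<^sub>R c j)"
  by (simp add: vec_eq_iff vector_matrix_mult_def outer_def inner_vec_def
      sum_distrib_left sum_distrib_right mult_ac sum.swap[of _ A])

lemma unit_key_times_outer_sum:
  assumes "finite A" "a \<in> A" "k a \<bullet> k a = 1"
  shows "k a v* (\<Sum>j\<in>A. outer (k j) (c j)) = c a + crosstalk A k c a"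
  unfolding vector_matrix_mult_outer_sum crosstalk_def using assms by (simp add: sum.remove)

lemma delta_rule_step_outer_sum:
  fixes k c :: "'i \<Rightarrow> real^'d"
  assumes A: "finite A" "a \<in> A" and unit: "k a \<bullet> k a = 1"
  defines "W \<equiv> \<Sum>j\<in>A. outer (k j) (c j)"
  shows "W - outer (k a) (k a) ** W + outer (k a) w
    = (\<Sum>j\<in>A. outer (k j) ((c(a := w - crosstalk A k c a)) j))"
proof -
  define R where "R = (\<Sum>j\<in>A - {a}. outer (k j) (c j))"
  have W: "W = outer (k a) (c a) + R"
    unfolding W_def R_def using A by (simp add: sum.remove)
  have "(\<Sum>j\<in>A. outer (k j) ((c(a := w - crosstalk A k c a)) j))
      = outer (k a) (w - crosstalk A k c a) + R"
    unfolding R_def using A by (simp add: sum.remove)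
  moreover have "outer (k a) (k a) ** W = outer (k a) (c a + crosstalk A k c a)"
    unfolding outer_matrix_mult W_def using A unit by (simp add: unit_key_times_outer_sum)
  ultimately show ?thesis
    unfolding W by (simp add: outer_add_right outer_diff_right)
qed

fun gd_coeff ::
  "nat \<Rightarrow> (nat \<Rightarrow> real^'d) \<Rightarrow> (nat \<Rightarrow> real^'d) \<Rightarrow> (nat \<Rightarrow> nat) \<Rightarrow> nat \<Rightarrow> nat \<Rightarrow> real^'d"
  where
    "gd_coeff m k v idx 0 = (\<lambda>_. 0)"
  | "gd_coeff m k v idx (Suc t) = (gd_coeff m k v idx t)(idx (Suc t) :=
       v (idx (Suc t)) - crosstalk {1..m} k (gd_coeff m k v idx t) (idx (Suc t)))"

lemma gd_state_eq_outer_sum: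
  assumes unit: "\<forall>i\<in>{1..m}. k i \<bullet> k i = 1" and stream: "\<forall>s\<in>{1..t}. idx s \<in> {1..m}"
  shows "gd_state k v idx t = (\<Sum>j\<in>{1..m}. outer (k j) (gd_coeff m k v idx t j))"
  using stream
proof (induction t)
  case (Suc t)
  then have "idx (Suc t) \<in> {1..m}"
    and "gd_state k v idx t = (\<Sum>j\<in>{1..m}. outer (k j) (gd_coeff m k v idx t j))"
    by auto
  then show ?case
    using unit by (simp add: delta_rule_step_outer_sum)
qed simp

lemma rcount_Suc: "rcount idx i (Suc t) = rcount idx i t + (if idx (Suc t) = i then 1 else 0)"
proof -
  have "{s \<in> {1..Suc t}. idx s = i}
      = {s \<in> {1..t}. idx s = i} \<union> (if idx (Suc t) = i then {Suc t} else {})"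
    by (auto simp: le_Suc_eq)
  then show ?thesis by (simp add: rcount_def)
qed

definition zero_or_near :: "real \<Rightarrow> 'a::real_normed_vector \<Rightarrow> 'a \<Rightarrow> bool" where
  "zero_or_near \<delta> w x \<longleftrightarrow> x = 0 \<or> dist x w \<le> \<delta>"

lemma norm_le_if_zero_or_near:
  assumes "zero_or_near \<delta> w x" "norm w = 1" "0 \<le> \<delta>"
  shows "norm x \<le> 1 + \<delta>"
  using assms norm_triangle_ineq2[of x w] by (auto simp: zero_or_near_def dist_norm)

lemma dist_le_if_zero_or_near:
  assumes "zero_or_near \<delta> w x" "zero_or_near \<delta> w y" "norm w = 1" "0 \<le> \<delta>" "\<delta> \<le> 1"
  shows "dist x y \<le> 1 + \<delta>"
proof (cases "x = 0 \<or> y = 0")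
  case True
  then show ?thesis
    using norm_le_if_zero_or_near[OF assms(1,3,4)] norm_le_if_zero_or_near[OF assms(2,3,4)] by auto
next
  case False
  then have "dist x w \<le> \<delta>" "dist y w \<le> \<delta>"
    using assms(1,2) by (auto simp: zero_or_near_def)
  then show ?thesis
    using dist_triangle2[of x y w] assms(5) by linarith
qed

locale delta_rule_recall =
  fixes m :: nat and k v :: "nat \<Rightarrow> real^'d" and \<epsilon> \<delta> :: real
  assumes keys_unit: "\<And>i. i \<in> {1..m} \<Longrightarrow> k i \<bullet> k i = 1"
    and keys_coherent: "\<And>i j. i \<in> {1..m} \<Longrightarrow> j \<in> {1..m} \<Longrightarrow> i \<noteq> j \<Longrightarrow> \<bar>k i \<bullet> k j\<bar> \<le> \<epsilon>"
    and values_unit: "\<And>i. i \<in> {1..m} \<Longrightarrow> norm (v i) = 1"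
    and \<delta>_nonneg: "0 \<le> \<delta>" and \<delta>_le_1: "\<delta> \<le> 1"
    and crosstalk_budget: "real (m - 1) * \<epsilon> * (1 + \<delta>) \<le> \<delta>"
begin

lemma norm_crosstalk_le:
  assumes a: "a \<in> {1..m}" and c: "\<And>j. j \<in> {1..m} - {a} \<Longrightarrow> norm (c j) \<le> 1 + \<delta>"
  shows "norm (crosstalk {1..m} k c a) \<le> \<delta>"
proof -
  have "norm (crosstalk {1..m} k c a) \<le> (\<Sum>j\<in>{1..m} - {a}. \<epsilon> * (1 + \<delta>))"
    unfolding crosstalk_def
  proof (rule sum_norm_le)
    fix j assume j: "j \<in> {1..m} - {a}"
    have "\<bar>k a \<bullet> k j\<bar> * norm (c j) \<le> \<epsilon> * (1 + \<delta>)"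
      using a j c[OF j] keys_coherent[of a j] by (intro mult_mono) auto
    then show "norm ((k a \<bullet> k j) *\<^sub>R c j) \<le> \<epsilon> * (1 + \<delta>)" by simp
  qed
  also have "\<dots> = real (m - 1) * \<epsilon> * (1 + \<delta>)"
    using a by simp
  finally show ?thesis
    using crosstalk_budget by linarith
qed

lemma gd_coeff_zero_or_near:
  assumes "\<forall>s\<in>{1..t}. idx s \<in> {1..m}" "j \<in> {1..m}"
  shows "zero_or_near \<delta> (v j) (gd_coeff m k v idx t j)"
  using assms
proof (induction t arbitrary: j)
  case 0
  then show ?case by (simp add: zero_or_near_def)
next
  case (Suc t)
  define a where "a = idx (Suc t)"
  have a: "a \<in> {1..m}"
    and IH: "\<And>j. j \<in> {1..m} \<Longrightarrow> zero_or_near \<delta> (v j) (gd_coeff m k v idx t j)"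
    using Suc by (auto simp: a_def)
  have "norm (crosstalk {1..m} k (gd_coeff m k v idx t) a) \<le> \<delta>"
  proof (rule norm_crosstalk_le[OF a])
    fix j assume "j \<in> {1..m} - {a}"
    then show "norm (gd_coeff m k v idx t j) \<le> 1 + \<delta>"
      using IH values_unit \<delta>_nonneg by (intro norm_le_if_zero_or_near[of \<delta> "v j"]) auto
  qed
  then show ?case
    using IH[OF Suc.prems(2)] by (simp add: a_def[symmetric] zero_or_near_def dist_norm)
qed

lemma gd_coeff_last_write:
  assumes "\<forall>s\<in>{1..t}. idx s \<in> {1..m}" "i \<in> {1..m}" "rcount idx i t > 0"
  shows "\<exists>c. (\<forall>j\<in>{1..m}. zero_or_near \<delta> (v j) (c j))
    \<and> gd_coeff m k v idx t i = v i - crosstalk {1..m} k c i"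
  using assms
proof (induction t)
  case 0
  then show ?case by (simp add: rcount_def)
next
  case (Suc t)
  show ?case
  proof (cases "idx (Suc t) = i")
    case True
    then show ?thesis
      using Suc.prems by (auto intro!: exI[of _ "gd_coeff m k v idx t"] gd_coeff_zero_or_near)
  next
    case False
    then show ?thesis
      using Suc by (simp add: rcount_Suc)
  qed
qed

text \<open>The current crosstalk and the one subtracted at the last write of key i are two
  sums of the same shape, so their difference is again bounded by the crosstalk budget.\<close>
lemma readout_near_value:
  assumes stream: "\<forall>s\<in>{1..t}. idx s \<in> {1..m}" and i: "i \<in> {1..m}" and seen: "rcount idx i t > 0"
  shows "dist (k i v* gd_state k v idx t) (v i) \<le> \<delta>"
proof -
  define C where "C = gd_coeff m k v idx t"
  obtain c where c: "\<forall>j\<in>{1..m}. zero_or_near \<delta> (v j) (c j)"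
    and Ci: "C i = v i - crosstalk {1..m} k c i"
    using gd_coeff_last_write[OF assms] C_def by blast
  have "gd_state k v idx t = (\<Sum>j\<in>{1..m}. outer (k j) (C j))"
    unfolding C_def by (rule gd_state_eq_outer_sum[OF _ stream]) (simp add: keys_unit)
  then have "k i v* gd_state k v idx t = C i + crosstalk {1..m} k C i"
    using keys_unit i by (simp add: unit_key_times_outer_sum)
  then have "k i v* gd_state k v idx t - v i = crosstalk {1..m} k (\<lambda>j. C j - c j) i"
    by (simp add: Ci crosstalk_diff)
  moreover have "norm (crosstalk {1..m} k (\<lambda>j. C j - c j) i) \<le> \<delta>"
  proof (rule norm_crosstalk_le[OF i])
    fix j assume "j \<in> {1..m} - {i}"
    then show "norm (C j - c j) \<le> 1 + \<delta>"
      using dist_le_if_zero_or_near[of \<delta> "v j" "C j" "c j"] gd_coeff_zero_or_near[OF stream] c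
        values_unit \<delta>_nonneg \<delta>_le_1 by (simp add: C_def dist_norm)
  qed
  ultimately show ?thesis
    by (simp add: dist_norm)
qed

end

lemma decode_argmax_eq_singleton:
  assumes i: "i \<in> {1..m}"
    and values_unit: "\<And>j. j \<in> {1..m} \<Longrightarrow> norm (v j) = 1"
    and incoherent: "\<And>j. j \<in> {1..m} \<Longrightarrow> j \<noteq> i \<Longrightarrow> v j \<bullet> v i \<le> \<alpha>"
    and near: "dist (q v* W) (v i) \<le> \<delta>"
    and margin: "\<alpha> + 2 * \<delta> < 1"
  shows "decode_argmax m v q W = {i}"
proof -
  define y where "y = q v* W"
  have err: "\<bar>v j \<bullet> (y - v i)\<bar> \<le> \<delta>" if "j \<in> {1..m}" for j
    using Cauchy_Schwarz_ineq2[of "v j" "y - v i"] values_unit[OF that] near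
    by (simp add: y_def dist_norm)
  have "v i \<bullet> y \<ge> 1 - \<delta>"
    using err[OF i] values_unit[OF i] by (simp add: inner_diff_right dot_square_norm)
  moreover have "v j \<bullet> y \<le> \<alpha> + \<delta>" if "j \<in> {1..m}" "j \<noteq> i" for j
    using err[OF that(1)] incoherent[OF that] by (simp add: inner_diff_right)
  ultimately have strict: "v j \<bullet> y < v i \<bullet> y" if "j \<in> {1..m}" "j \<noteq> i" for j
    using that margin by fastforce
  have "(\<forall>j\<in>{1..m}. v j \<bullet> y \<le> v x \<bullet> y) \<longleftrightarrow> x = i" if "x \<in> {1..m}" for x
  proof (cases "x = i")
    case True
    then show ?thesis
      using strict by (metis less_imp_le order_refl)
  next
    case False
    then show ?thesis
      using strict[OF that] i by (auto simp: not_le)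
  qed
  then show ?thesis
    unfolding decode_argmax_def y_def[symmetric] using i by auto
qed

lemma recall_threshold_arith:
  fixes M \<epsilon> \<alpha> :: real
  assumes M: "M \<ge> 2" and \<epsilon>: "\<epsilon> \<le> 1 / (M\<^sup>2 * (M - 1))" and \<alpha>: "\<alpha> < (M - 1) / (M + 1)"
  defines "\<delta> \<equiv> 1 / (M\<^sup>2 - 1)"
  shows "(M - 1) * \<epsilon> * (1 + \<delta>) \<le> \<delta>" "0 \<le> \<delta>" "\<delta> \<le> 1" "\<alpha> + 2 * \<delta> < 1"
proof -
  have M2: "M\<^sup>2 \<ge> 4"
    using power_mono[OF M, of 2] by simp
  have one_plus: "1 + \<delta> = M\<^sup>2 / (M\<^sup>2 - 1)"
    using M2 by (simp add: \<delta>_def field_simps)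
  have "(M - 1) * \<epsilon> \<le> (M - 1) * (1 / (M\<^sup>2 * (M - 1)))"
    using \<epsilon> M by (intro mult_left_mono) auto
  also have "\<dots> = 1 / M\<^sup>2"
    using M by (simp add: field_simps)
  finally have "(M - 1) * \<epsilon> \<le> 1 / M\<^sup>2" .
  then have "(M - 1) * \<epsilon> * (1 + \<delta>) \<le> 1 / M\<^sup>2 * (M\<^sup>2 / (M\<^sup>2 - 1))"
    unfolding one_plus using M2 by (intro mult_right_mono) auto
  also have "\<dots> = \<delta>"
    using M M2 by (simp add: \<delta>_def)
  finally show "(M - 1) * \<epsilon> * (1 + \<delta>) \<le> \<delta>" .
  show "0 \<le> \<delta>" "\<delta> \<le> 1"
    using M2 by (simp_all add: \<delta>_def)
  have "0 \<le> (M - 2) * (M + 1)"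
    using M by simp
  then have "M + 1 \<le> M\<^sup>2 - 1"
    by (simp add: power2_eq_square algebra_simps)
  then have "2 * \<delta> \<le> 2 / (M + 1)"
    using M by (simp add: \<delta>_def frac_le)
  moreover have "(M - 1) / (M + 1) = 1 - 2 / (M + 1)"
    using M by (simp add: field_simps)
  ultimately show "\<alpha> + 2 * \<delta> < 1"
    using \<alpha> by linarith
qed

theorem mainTheorem6:
  fixes m N :: nat and k v :: "nat \<Rightarrow> real^'d" and \<epsilon> \<alpha> :: real and idx :: "nat \<Rightarrow> nat"
  assumes m2: "m \<ge> 2"
    and kdist: "\<forall>i\<in>{1..m}. \<forall>j\<in>{1..m}. i \<noteq> j \<longrightarrow> k i \<noteq> k j"
    and JL: "eps_JL m k \<epsilon>"
    and eps: "\<epsilon> \<le> 1 / (real m ^ 2 * (real m - 1))"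
    and vnorm: "\<forall>i\<in>{1..m}. v i \<bullet> v i = 1"
    and vinc: "\<forall>i\<in>{1..m}. \<forall>j\<in>{1..m}. i \<noteq> j \<longrightarrow> \<bar>v i \<bullet> v j\<bar> \<le> \<alpha>"
    and alpha: "\<alpha> < (real m - 1) / (real m + 1)"
    and stream: "\<forall>t\<in>{1..N}. idx t \<in> {1..m}"
  shows "\<forall>t\<in>{0..N}. \<forall>i\<in>{1..m}. rcount idx i t > 0 \<longrightarrow>
           decode_argmax m v (k i) (gd_state k v idx t) = {i}"
proof (intro ballI impI)
  fix t i assume t: "t \<in> {0..N}" and i: "i \<in> {1..m}" and seen: "rcount idx i t > 0"
  define \<delta> where "\<delta> = 1 / ((real m)\<^sup>2 - 1)"
  note arith = recall_threshold_arith[of "real m", folded \<delta>_def, OF _ eps alpha]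
  have values_unit: "\<And>j. j \<in> {1..m} \<Longrightarrow> norm (v j) = 1"
    using vnorm by (simp add: norm_eq_sqrt_inner)
  interpret delta_rule_recall m k v \<epsilon> \<delta>
    using JL values_unit arith m2 by unfold_locales (auto simp: eps_JL_def of_nat_diff)
  have "dist (k i v* gd_state k v idx t) (v i) \<le> \<delta>"
    using readout_near_value i seen stream t by simp
  then show "decode_argmax m v (k i) (gd_state k v idx t) = {i}"
    using i values_unit vinc arith m2
    by (intro decode_argmax_eq_singleton[where \<alpha> = \<alpha>]) (auto simp: abs_le_iff)
qed

end
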